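(* The group $\operatorname{IET}^{\bowtie}$ is generated by the images of flips.
   Context: $X=[0,1[$. $\widehat{\operatorname{IET}^{\bowtie}}$ is the group of bijections $f:X\to X$ for which there is a finite partition of $X$ into intervals $[a,b[$ such that on each open interval $]a,b[$, $f$ is of the form $x\mapsto x+c$ or $x\mapsto -x+c$. ${\mathfrak S}_{\mathrm{fin}}$ is its normal subgroup of finitely supported permutations and $\operatorname{IET}^{\bowtie}=\widehat{\operatorname{IET}^{\bowtie}}/{\mathfrak S}_{\mathrm{fin}}$. For a nonempty interval $I=[a,b[\subseteq X$, the $I$-flip is the bijection of $X$ mapping $x\mapsto a+b-x$ on $]a,b[$ and fixing every other point; a flip is an $I$-flip for some such $I$, and "images of flips" means their images in $\operatorname{IET}^{\bowtie}$. *)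

theory Defs
  imports "HOL-Algebra.Algebra"
begin

definition IX :: "real set" where "IX = {0..<1}"

definition piecewise_isom :: "(real \<Rightarrow> real) \<Rightarrow> bool" where
  "piecewise_isom f \<longleftrightarrow> (\<exists>P :: (real \<times> real) set. finite P \<and>
      (\<forall>(a,b)\<in>P. a < b) \<and>
      (\<Union>(a,b)\<in>P. {a..<b}) = IX \<and>
      (\<forall>p\<in>P. \<forall>q\<in>P. p \<noteq> q \<longrightarrow> {fst p..<snd p} \<inter> {fst q..<snd q} = {}) \<and>
      (\<forall>(a,b)\<in>P. \<exists>c. (\<forall>x\<in>{a<..<b}. f x = x + c) \<or> (\<forall>x\<in>{a<..<b}. f x = - x + c)))"

definition IETh_carrier :: "(real \<Rightarrow> real) set" where
  "IETh_carrier = {f. bij_betw f IX IX \<and> (\<forall>x. x \<notin> IX \<longrightarrow> f x = x) \<and> piecewise_isom f}"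

definition IETh :: "(real \<Rightarrow> real) monoid" where
  "IETh = \<lparr>carrier = IETh_carrier, monoid.mult = (\<lambda>f g. f \<circ> g), one = id\<rparr>"

definition Sfin :: "(real \<Rightarrow> real) set" where
  "Sfin = {f \<in> IETh_carrier. finite {x. f x \<noteq> x}}"

definition IET :: "(real \<Rightarrow> real) set monoid" where
  "IET = IETh Mod Sfin"

definition flip :: "real \<Rightarrow> real \<Rightarrow> real \<Rightarrow> real" where
  "flip a b x = (if a < x \<and> x < b then a + b - x else x)"

definition flips :: "(real \<Rightarrow> real) set" where
  "flips = {flip a b | a b. 0 \<le> a \<and> a < b \<and> b \<le> 1}"

end

theory Submission
  imports Defs
begin

(* Every element of the group agrees with a product of flips outside a finite set. Suppose f is the
   identity on [0,t) up to finitely many points, and let b be the first breakpoint of f after t. Being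
   a bijection, f maps ]t,b[ isometrically onto some ]p,q[ inside [t,1]. The three flips rotating
   [t,q) (exchanging the blocks [t,p) and [p,q)), followed if necessary by the flip of ]t,b[, turn f
   into a map that is the identity on [0,b) up to finitely many points; the other pieces of f land in
   [t,p) or [q,1), where the rotation is a translation, so no breakpoint is created above b, and
   induction on the number of breakpoints concludes. The inverse of a product of flips is again one,
   so the same description shows that the group is closed under inverses. *)

section \<open>Piecewise isometries and their breakpoints\<close>

definition isom_on :: "(real \<Rightarrow> real) \<Rightarrow> real \<Rightarrow> real \<Rightarrow> bool" where
  "isom_on f u v \<longleftrightarrow> (\<exists>c. (\<forall>x\<in>{u<..<v}. f x = x + c) \<or> (\<forall>x\<in>{u<..<v}. f x = - x + c))"

definition isom_on_gaps :: "(real \<Rightarrow> real) \<Rightarrow> real \<Rightarrow> real set \<Rightarrow> bool" where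
  "isom_on_gaps f t B \<longleftrightarrow>
     (\<forall>u v. t \<le> u \<longrightarrow> u < v \<longrightarrow> v \<le> 1 \<longrightarrow> {u<..<v} \<inter> B = {} \<longrightarrow> isom_on f u v)"

lemma isom_on_subinterval: "isom_on f u v \<Longrightarrow> u \<le> u' \<Longrightarrow> v' \<le> v \<Longrightarrow> isom_on f u' v'"
  unfolding isom_on_def by (meson greaterThanLessThan_iff less_le_trans le_less_trans)

lemma isom_on_cong: "isom_on f u v \<Longrightarrow> (\<And>x. x \<in> {u<..<v} \<Longrightarrow> g x = f x) \<Longrightarrow> isom_on g u v"
  unfolding isom_on_def by auto

lemma isom_on_comp:
  assumes "isom_on g u v" "isom_on f a b" "g ` {u<..<v} \<subseteq> {a<..<b}"
  shows "isom_on (f \<circ> g) u v"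
proof -
  obtain c where c: "(\<forall>x\<in>{u<..<v}. g x = x + c) \<or> (\<forall>x\<in>{u<..<v}. g x = - x + c)"
    using assms(1) unfolding isom_on_def by blast
  obtain d where d: "(\<forall>y\<in>{a<..<b}. f y = y + d) \<or> (\<forall>y\<in>{a<..<b}. f y = - y + d)"
    using assms(2) unfolding isom_on_def by blast
  have g_in: "g x \<in> {a<..<b}" if "x \<in> {u<..<v}" for x
    using assms(3) that by blast
  from c d show ?thesis
  proof (elim disjE)
    assume "\<forall>x\<in>{u<..<v}. g x = x + c" "\<forall>y\<in>{a<..<b}. f y = y + d"
    then have "\<forall>x\<in>{u<..<v}. f (g x) = x + (c + d)" using g_in by (simp add: add.assoc)
    then show ?thesis unfolding isom_on_def by auto
  next
    assume "\<forall>x\<in>{u<..<v}. g x = x + c" "\<forall>y\<in>{a<..<b}. f y = - y + d"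
    then have "\<forall>x\<in>{u<..<v}. f (g x) = - x + (d - c)" using g_in by simp
    then show ?thesis unfolding isom_on_def by auto
  next
    assume "\<forall>x\<in>{u<..<v}. g x = - x + c" "\<forall>y\<in>{a<..<b}. f y = y + d"
    then have "\<forall>x\<in>{u<..<v}. f (g x) = - x + (c + d)" using g_in by simp
    then show ?thesis unfolding isom_on_def by auto
  next
    assume "\<forall>x\<in>{u<..<v}. g x = - x + c" "\<forall>y\<in>{a<..<b}. f y = - y + d"
    then have "\<forall>x\<in>{u<..<v}. f (g x) = x + (d - c)" using g_in by simp
    then show ?thesis unfolding isom_on_def by auto
  qed
qed

lemma image_add_Ioo: "(\<lambda>x. x + c) ` {u<..<v} = {u + c<..<v + (c::real)}"
  by (auto intro: image_eqI[where x = "y - c" for y])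

lemma image_neg_add_Ioo: "(\<lambda>x. - x + c) ` {u<..<v} = {c - v<..<c - (u::real)}"
  by (auto intro: image_eqI[where x = "c - y" for y])

lemma isom_on_image:
  assumes "isom_on f u v"
  shows "\<exists>a. f ` {u<..<v} = {a<..<a + (v - u)}"
proof -
  obtain c where "(\<forall>x\<in>{u<..<v}. f x = x + c) \<or> (\<forall>x\<in>{u<..<v}. f x = - x + c)"
    using assms unfolding isom_on_def by blast
  then have "f ` {u<..<v} = (\<lambda>x. x + c) ` {u<..<v} \<or> f ` {u<..<v} = (\<lambda>x. - x + c) ` {u<..<v}"
    by (metis (no_types, lifting) image_cong)
  then have "f ` {u<..<v} = {u + c<..<v + c} \<or> f ` {u<..<v} = {c - v<..<c - u}"
    by (simp only: image_add_Ioo image_neg_add_Ioo)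
  moreover have "v + c = (u + c) + (v - u)" "c - u = (c - v) + (v - u)" by simp_all
  ultimately show ?thesis by metis
qed

lemma isom_on_self_cases:
  assumes "isom_on h t b" "t < b" "h ` {t<..<b} \<subseteq> {t<..<b}"
  shows "(\<forall>x\<in>{t<..<b}. h x = x) \<or> (\<forall>x\<in>{t<..<b}. h x = flip t b x)"
proof -
  obtain c where "(\<forall>x\<in>{t<..<b}. h x = x + c) \<or> (\<forall>x\<in>{t<..<b}. h x = - x + c)"
    using assms(1) unfolding isom_on_def by blast
  then show ?thesis
  proof
    assume h: "\<forall>x\<in>{t<..<b}. h x = x + c"
    then have "h ` {t<..<b} = {t + c<..<b + c}"
      by (metis (no_types, lifting) image_cong image_add_Ioo)
    then have "c = 0"
      using assms(2,3) by (simp add: greaterThanLessThan_subseteq_greaterThanLessThan)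
    then show ?thesis using h by simp
  next
    assume h: "\<forall>x\<in>{t<..<b}. h x = - x + c"
    then have "h ` {t<..<b} = {c - b<..<c - t}"
      by (metis (no_types, lifting) image_cong image_neg_add_Ioo)
    then have "c = t + b"
      using assms(2,3) by (simp add: greaterThanLessThan_subseteq_greaterThanLessThan)
    then show ?thesis using h by (simp add: flip_def)
  qed
qed

lemma isom_on_comp_outside:
  assumes "isom_on f u v" "u < v" "f ` {u<..<v} \<subseteq> {t..1}"
    and "f ` {u<..<v} \<inter> {p<..<q} = {}" "p < q" "isom_on w t p" "isom_on w q 1"
  shows "isom_on (w \<circ> f) u v"
proof -
  obtain a where img: "f ` {u<..<v} = {a<..<a + (v - u)}"
    using isom_on_image assms(1) by blast
  then have "t \<le> a" "a + (v - u) \<le> 1"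
    using assms(2,3) by (simp_all add: greaterThanLessThan_subseteq_atLeastAtMost_iff)
  moreover have "a + (v - u) \<le> p \<or> q \<le> a"
    using assms(2,4,5) img by auto
  ultimately have "f ` {u<..<v} \<subseteq> {t<..<p} \<or> f ` {u<..<v} \<subseteq> {q<..<1}"
    using img assms(2) by (auto simp: greaterThanLessThan_subseteq_greaterThanLessThan)
  then show ?thesis
    using isom_on_comp[OF assms(1)] assms(6,7) by blast
qed

lemma exists_gap_around:
  fixes K :: "'a::linorder set"
  assumes "finite K" "a0 \<in> K" "a0 \<le> x" "b0 \<in> K" "x < b0"
  shows "\<exists>a\<in>K. \<exists>b\<in>K. a \<le> x \<and> x < b \<and> {a<..<b} \<inter> K = {}"
proof -
  define L where "L = {y\<in>K. y \<le> x}"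
  define R where "R = {y\<in>K. x < y}"
  have L: "finite L" "L \<noteq> {}" and R: "finite R" "R \<noteq> {}"
    using assms unfolding L_def R_def by auto
  have "Max L \<in> L" "Min R \<in> R"
    using L R by simp_all
  moreover have "{Max L<..<Min R} \<inter> K = {}"
  proof (rule ccontr)
    assume "{Max L<..<Min R} \<inter> K \<noteq> {}"
    then obtain y where "y \<in> K" "Max L < y" "y < Min R" by auto
    then have "y \<in> L \<or> y \<in> R" unfolding L_def R_def by auto
    then show False
      using L R Max_ge[of L y] Min_le[of R y] \<open>Max L < y\<close> \<open>y < Min R\<close> by auto
  qed
  ultimately show ?thesis unfolding L_def R_def by blast
qed

lemma overlapping_gaps_eq:
  fixes a b a' b' :: "'a::linorder"
  assumes "a \<in> K" "b \<in> K" "a' \<in> K" "b' \<in> K" "{a<..<b} \<inter> K = {}" "{a'<..<b'} \<inter> K = {}"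
    and "{a..<b} \<inter> {a'..<b'} \<noteq> {}"
  shows "a = a' \<and> b = b'"
proof -
  have "a < b'" "a' < b" using assms(7) by auto
  have "a' \<notin> {a<..<b}" "a \<notin> {a'<..<b'}" "b \<notin> {a'<..<b'}" "b' \<notin> {a<..<b}"
    using assms(1-6) by blast+
  with \<open>a < b'\<close> \<open>a' < b\<close> show ?thesis by auto
qed

lemma piecewise_isom_imp_gaps:
  assumes "piecewise_isom f"
  shows "\<exists>B. finite B \<and> isom_on_gaps f 0 B"
proof -
  obtain P :: "(real \<times> real) set" where fin: "finite P"
    and cover: "(\<Union>(a,b)\<in>P. {a..<b}) = IX"
    and isom: "\<forall>(a,b)\<in>P. isom_on f a b"
    using assms unfolding piecewise_isom_def isom_on_def by blast
  define B where "B = fst ` P \<union> snd ` P"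
  have "isom_on_gaps f 0 B"
    unfolding isom_on_gaps_def
  proof (intro allI impI)
    fix u v :: real
    assume uv: "0 \<le> u" "u < v" "v \<le> 1" "{u<..<v} \<inter> B = {}"
    have "(u + v) / 2 \<in> IX" using uv unfolding IX_def by auto
    then obtain a b where ab: "(a,b) \<in> P" "(u + v) / 2 \<in> {a..<b}" using cover by blast
    then have "a \<notin> {u<..<v}" "b \<notin> {u<..<v}" using uv(4) unfolding B_def by force+
    with ab uv(2) have "a \<le> u" "v \<le> b" by auto
    with ab isom show "isom_on f u v" using isom_on_subinterval by blast
  qed
  moreover have "finite B" using fin unfolding B_def by simp
  ultimately show ?thesis by blast
qed

lemma gaps_imp_piecewise_isom:
  assumes "finite B" "isom_on_gaps f 0 B"
  shows "piecewise_isom f"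
proof -
  define K where "K = insert 0 (insert 1 (B \<inter> {0..1}))"
  define P where "P = {(a,b). a \<in> K \<and> b \<in> K \<and> a < b \<and> {a<..<b} \<inter> K = {}}"
  have K: "finite K" "K \<subseteq> {0..1}" "0 \<in> K" "1 \<in> K"
    using assms(1) unfolding K_def by auto
  have "finite P"
    by (rule finite_subset[of _ "K \<times> K"]) (auto simp: P_def K)
  moreover have "(\<Union>(a,b)\<in>P. {a..<b}) = IX"
  proof
    show "(\<Union>(a,b)\<in>P. {a..<b}) \<subseteq> IX" using K(2) unfolding P_def IX_def by force
    show "IX \<subseteq> (\<Union>(a,b)\<in>P. {a..<b})"
    proof
      fix x assume "x \<in> IX"
      then obtain a b where "a \<in> K" "b \<in> K" "a \<le> x" "x < b" "{a<..<b} \<inter> K = {}"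
        using exists_gap_around[OF K(1,3) _ K(4), of x] unfolding IX_def by auto
      then have "(a,b) \<in> P" "x \<in> {a..<b}" unfolding P_def by auto
      then show "x \<in> (\<Union>(a,b)\<in>P. {a..<b})" by blast
    qed
  qed
  moreover have "\<forall>p\<in>P. \<forall>q\<in>P. p \<noteq> q \<longrightarrow> {fst p..<snd p} \<inter> {fst q..<snd q} = {}"
    unfolding P_def using overlapping_gaps_eq[of _ K] by fastforce
  moreover have "\<forall>(a,b)\<in>P. isom_on f a b"
  proof clarify
    fix a b assume "(a,b) \<in> P"
    then have "a \<in> K" "b \<in> K" "a < b" "{a<..<b} \<inter> K = {}" unfolding P_def by auto
    moreover from this have "{a<..<b} \<inter> B = {}" using K(2) unfolding K_def by auto
    moreover have "0 \<le> a" "b \<le> 1" using \<open>a \<in> K\<close> \<open>b \<in> K\<close> K(2) by auto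
    ultimately show "isom_on f a b"
      using assms(2) unfolding isom_on_gaps_def by blast
  qed
  ultimately show ?thesis
    unfolding piecewise_isom_def isom_on_def P_def by blast
qed

lemma piecewise_isom_iff_gaps: "piecewise_isom f \<longleftrightarrow> (\<exists>B. finite B \<and> isom_on_gaps f 0 B)"
  using piecewise_isom_imp_gaps gaps_imp_piecewise_isom by blast

lemma IETh_carrier_iff: "f \<in> IETh_carrier \<longleftrightarrow> f permutes IX \<and> (\<exists>B. finite B \<and> isom_on_gaps f 0 B)"
  unfolding IETh_carrier_def piecewise_isom_iff_gaps
  by (auto intro: bij_imp_permutes permutes_imp_bij permutes_not_in)

lemma IETh_carrier_bij: "f \<in> IETh_carrier \<Longrightarrow> bij f"
  unfolding IETh_carrier_iff using permutes_bij by blast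

lemma IETh_carrier_comp:
  assumes "f \<in> IETh_carrier" "g \<in> IETh_carrier"
  shows "f \<circ> g \<in> IETh_carrier"
proof -
  obtain Bf Bg where f: "f permutes IX" "finite Bf" "isom_on_gaps f 0 Bf"
    and g: "g permutes IX" "finite Bg" "isom_on_gaps g 0 Bg"
    using assms unfolding IETh_carrier_iff by blast
  define B where "B = Bg \<union> g -` Bf"
  have "finite B"
    unfolding B_def using f(2) g(2) permutes_inj[OF g(1)] by (simp add: finite_vimageI)
  moreover have "isom_on_gaps (f \<circ> g) 0 B"
    unfolding isom_on_gaps_def
  proof (intro allI impI)
    fix u v :: real
    assume uv: "0 \<le> u" "u < v" "v \<le> 1" "{u<..<v} \<inter> B = {}"
    then have g_isom: "isom_on g u v"
      using g(3) unfolding isom_on_gaps_def B_def by blast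
    then obtain a where img: "g ` {u<..<v} = {a<..<a + (v - u)}"
      using isom_on_image by blast
    have "g ` {u<..<v} \<subseteq> {0..1}"
      using permutes_in_image[OF g(1)] uv unfolding IX_def by fastforce
    then have "0 \<le> a" "a + (v - u) \<le> 1"
      using img uv(2) by (simp_all add: greaterThanLessThan_subseteq_atLeastAtMost_iff)
    moreover have "{a<..<a + (v - u)} \<inter> Bf = {}"
      using uv(4) unfolding img[symmetric] B_def by blast
    ultimately have "isom_on f a (a + (v - u))"
      using f(3) uv(2) unfolding isom_on_gaps_def by simp
    then show "isom_on (f \<circ> g) u v"
      using isom_on_comp g_isom img by blast
  qed
  ultimately show ?thesis
    using permutes_compose[OF g(1) f(1)] unfolding IETh_carrier_iff by blast
qed

lemma id_in_IETh_carrier: "id \<in> IETh_carrier"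
  unfolding IETh_carrier_iff isom_on_gaps_def isom_on_def
  by (auto intro: permutes_id exI[of _ "{}"] exI[of _ 0])

lemma flip_flip [simp]: "flip a b (flip a b x) = x"
  unfolding flip_def by auto

lemma flip_inside: "a < y \<Longrightarrow> y < b \<Longrightarrow> flip a b y = a + b - y"
  and flip_outside: "y \<le> a \<or> b \<le> y \<Longrightarrow> flip a b y = y"
  by (auto simp: flip_def)

lemma flip_in_IETh_carrier:
  assumes "0 \<le> a" "a \<le> b" "b \<le> 1"
  shows "flip a b \<in> IETh_carrier"
proof -
  have "flip a b permutes IX"
    unfolding permutes_def
  proof (intro conjI allI impI)
    show "flip a b x = x" if "x \<notin> IX" for x
      using that assms unfolding flip_def IX_def by auto
    show "\<exists>!x. flip a b x = y" for y
      by (metis flip_flip)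
  qed
  moreover have "isom_on_gaps (flip a b) 0 {a, b}"
    unfolding isom_on_gaps_def
  proof (intro allI impI)
    fix u v :: real
    assume "u < v" "{u<..<v} \<inter> {a, b} = {}"
    then have "a \<notin> {u<..<v}" "b \<notin> {u<..<v}" by auto
    show "isom_on (flip a b) u v"
    proof (cases "a \<le> u \<and> v \<le> b")
      case True
      then have "\<forall>x\<in>{u<..<v}. flip a b x = - x + (a + b)" by (auto simp: flip_inside)
      then show ?thesis unfolding isom_on_def by blast
    next
      case False
      with \<open>a \<notin> {u<..<v}\<close> \<open>b \<notin> {u<..<v}\<close> have "\<forall>x\<in>{u<..<v}. flip a b x = x + 0"
        by (auto simp: flip_def)
      then show ?thesis unfolding isom_on_def by blast
    qed
  qed
  moreover have "finite {a, b}" by simp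
  ultimately show ?thesis unfolding IETh_carrier_iff by blast
qed

lemma flip_self: "flip a a = id"
  by (auto simp: flip_def)

lemma flips_subset_IETh_carrier: "flips \<subseteq> IETh_carrier"
  unfolding flips_def using flip_in_IETh_carrier by fastforce

section \<open>Every element is a finite modification of a product of flips\<close>

definition close_to_flip_product :: "(real \<Rightarrow> real) \<Rightarrow> bool" where
  "close_to_flip_product f \<longleftrightarrow> (\<exists>ps. set ps \<subseteq> flips \<and> finite {x. f x \<noteq> foldr (\<circ>) ps id x})"

lemma close_to_flip_product_flip_comp_iff:
  assumes "0 \<le> a" "a \<le> b" "b \<le> 1"
  shows "close_to_flip_product (flip a b \<circ> g) \<longleftrightarrow> close_to_flip_product g"
proof (cases "a = b")
  case False
  then have flip: "flip a b \<in> flips" using assms unfolding flips_def by force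
  have cons: "close_to_flip_product (flip a b \<circ> h)" if h: "close_to_flip_product h" for h
  proof -
    obtain ps where ps: "set ps \<subseteq> flips" "finite {x. h x \<noteq> foldr (\<circ>) ps id x}"
      using h unfolding close_to_flip_product_def by blast
    have "inj (flip a b)" by (metis flip_flip injI)
    then have "{x. flip a b (h x) \<noteq> foldr (\<circ>) (flip a b # ps) id x} = {x. h x \<noteq> foldr (\<circ>) ps id x}"
      by (simp add: inj_eq)
    then show ?thesis
      using ps flip unfolding close_to_flip_product_def by (intro exI[of _ "flip a b # ps"]) auto
  qed
  have "flip a b \<circ> (flip a b \<circ> g) = g" by (simp add: fun_eq_iff)
  then show ?thesis using cons[of g] cons[of "flip a b \<circ> g"] by auto
qed (simp add: flip_self)

lemma Ioo_diff_finite_nonempty: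
  fixes a b :: real
  assumes "a < b" "finite F"
  obtains x where "x \<in> {a<..<b}" "x \<notin> F"
  using assms infinite_Ioo[of a b] finite_subset[of "{a<..<b}" F] by blast

lemma Ioo_subset_Icc_if_almost_all:
  fixes a b :: real
  assumes "finite F" "{a<..<b} - F \<subseteq> {p..q}"
  shows "{a<..<b} \<subseteq> {p..q}"
proof
  fix x assume x: "x \<in> {a<..<b}"
  show "x \<in> {p..q}"
  proof (rule ccontr)
    assume "x \<notin> {p..q}"
    then have "a < min b p \<or> max a q < b" using x by auto
    then show False
    proof
      assume "a < min b p"
      then obtain y where "y \<in> {a<..<min b p}" "y \<notin> F"
        using Ioo_diff_finite_nonempty assms(1) by blast
      then show False using assms(2) by auto
    next
      assume "max a q < b"
      then obtain y where "y \<in> {max a q<..<b}" "y \<notin> F"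
        using Ioo_diff_finite_nonempty assms(1) by blast
      then show False using assms(2) by auto
    qed
  qed
qed

lemma finite_moved_below:
  fixes f :: "'a::linorder \<Rightarrow> 'a"
  assumes "inj f" "finite {x. x < t \<and> f x \<noteq> x}"
  shows "finite {x. t \<le> x \<and> f x < t}"
proof -
  have "{x. t \<le> x \<and> f x < t} \<subseteq> f -` {y. y < t \<and> f y \<noteq> y}"
  proof
    fix x assume x: "x \<in> {x. t \<le> x \<and> f x < t}"
    have "f (f x) = f x \<Longrightarrow> f x = x" using assms(1) by (simp add: inj_eq)
    with x show "x \<in> f -` {y. y < t \<and> f y \<noteq> y}" by auto
  qed
  then show ?thesis using finite_vimageI[OF assms(2,1)] finite_subset by blast
qed

definition reduced_below :: "real \<Rightarrow> (real \<Rightarrow> real) \<Rightarrow> real set \<Rightarrow> bool" where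
  "reduced_below t f B \<longleftrightarrow> f \<in> IETh_carrier \<and> 0 \<le> t \<and> t \<le> 1 \<and> finite {x. x < t \<and> f x \<noteq> x}
     \<and> finite B \<and> B \<subseteq> {t<..<1} \<and> isom_on_gaps f t B"

lemma reduced_below_image_subset:
  assumes red: "reduced_below t f B" and "t \<le> u" "v \<le> 1" "isom_on f u v"
  shows "f ` {u<..<v} \<subseteq> {t..1}"
proof -
  have f: "f permutes IX" and "0 \<le> t" and "finite {x. x < t \<and> f x \<noteq> x}"
    using red unfolding reduced_below_def IETh_carrier_iff by auto
  then have moved: "finite {x. t \<le> x \<and> f x < t}"
    using finite_moved_below permutes_inj by blast
  obtain a where img: "f ` {u<..<v} = {a<..<a + (v - u)}"
    using isom_on_image \<open>isom_on f u v\<close> by blast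
  have "{a<..<a + (v - u)} - f ` {x. t \<le> x \<and> f x < t} \<subseteq> {t..1}"
  proof
    fix y assume y: "y \<in> {a<..<a + (v - u)} - f ` {x. t \<le> x \<and> f x < t}"
    then obtain x where x: "x \<in> {u<..<v}" "y = f x"
      unfolding img[symmetric] by blast
    with y \<open>t \<le> u\<close> have "t \<le> f x" by force
    moreover have "x \<in> IX" using x(1) \<open>t \<le> u\<close> \<open>v \<le> 1\<close> \<open>0 \<le> t\<close> unfolding IX_def by simp
    then have "f x \<in> IX" using permutes_in_image[OF f] by simp
    ultimately show "y \<in> {t..1}"
      using x(2) unfolding IX_def by simp
  qed
  then show ?thesis
    unfolding img using Ioo_subset_Icc_if_almost_all moved by blast
qed

definition rotation :: "real \<Rightarrow> real \<Rightarrow> real \<Rightarrow> real \<Rightarrow> real" where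
  "rotation t p q = flip t q \<circ> flip t p \<circ> flip p q"

lemma rotation_apply:
  assumes "t \<le> p" "p \<le> q"
  shows rotation_apply_left: "y \<in> {t<..<p} \<Longrightarrow> rotation t p q y = y + (q - p)"
    and rotation_apply_right: "y \<in> {p<..<q} \<Longrightarrow> rotation t p q y = y + (t - p)"
    and rotation_apply_outside: "y \<le> t \<or> q \<le> y \<Longrightarrow> rotation t p q y = y"
  using assms by (auto simp: rotation_def flip_inside flip_outside)

lemma rotation_isom_on_right: "t \<le> p \<Longrightarrow> p \<le> q \<Longrightarrow> isom_on (rotation t p q) p q"
  using rotation_apply_right unfolding isom_on_def by blast

lemma rotation_image_right:
  assumes "t \<le> p" "p \<le> q"
  shows "rotation t p q ` {p<..<q} = {t<..<t + (q - p)}"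
proof -
  have "rotation t p q ` {p<..<q} = (\<lambda>y. y + (t - p)) ` {p<..<q}"
    using rotation_apply_right[OF assms] by (intro image_cong) auto
  also have "\<dots> = {t<..<t + (q - p)}"
    by (simp only: image_add_Ioo) (simp add: algebra_simps)
  finally show ?thesis .
qed

lemma rotation_in_IETh_carrier:
  "0 \<le> t \<Longrightarrow> t \<le> p \<Longrightarrow> p \<le> q \<Longrightarrow> q \<le> 1 \<Longrightarrow> rotation t p q \<in> IETh_carrier"
  unfolding rotation_def by (intro IETh_carrier_comp flip_in_IETh_carrier) auto

lemma close_to_flip_product_rotation_comp_iff:
  assumes "0 \<le> t" "t \<le> p" "p \<le> q" "q \<le> 1"
  shows "close_to_flip_product (rotation t p q \<circ> g) \<longleftrightarrow> close_to_flip_product g"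
proof -
  have "rotation t p q \<circ> g = flip t q \<circ> (flip t p \<circ> (flip p q \<circ> g))"
    by (simp add: rotation_def comp_assoc)
  then show ?thesis
    using assms by (simp add: close_to_flip_product_flip_comp_iff)
qed

lemma flip_comp_rotation:
  assumes "0 \<le> t" "t \<le> p" "p \<le> q" "q \<le> 1" "s \<in> {t, t + (q - p)}"
  defines "w \<equiv> flip t s \<circ> rotation t p q"
  shows "w \<in> IETh_carrier" and "\<forall>y\<le>t. w y = y" and "isom_on w t p" and "isom_on w q 1"
    and "close_to_flip_product (w \<circ> g) \<longleftrightarrow> close_to_flip_product g"
proof -
  show "w \<in> IETh_carrier"
    unfolding w_def using assms(1-5)
    by (auto intro!: IETh_carrier_comp flip_in_IETh_carrier rotation_in_IETh_carrier)
  show "\<forall>y\<le>t. w y = y"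
    unfolding w_def using assms(2,3) by (simp add: rotation_apply_outside flip_outside)
  have "w y = y + (q - p)" if "y \<in> {t<..<p}" for y
    using that assms(2,3,5) rotation_apply_left[OF assms(2,3) that] unfolding w_def
    by (auto simp: flip_outside)
  then show "isom_on w t p"
    unfolding isom_on_def by blast
  have "w y = y + 0" if "y \<in> {q<..<1}" for y
    using that assms(2,3,5) rotation_apply_outside[OF assms(2,3)] unfolding w_def
    by (auto simp: flip_outside)
  then show "isom_on w q 1"
    unfolding isom_on_def by blast
  show "close_to_flip_product (w \<circ> g) \<longleftrightarrow> close_to_flip_product g"
    using assms(1-5) unfolding w_def comp_assoc
    by (auto simp: close_to_flip_product_flip_comp_iff close_to_flip_product_rotation_comp_iff)
qed

lemma finite_moved_below_comp:
  fixes f w :: "'a::linorder \<Rightarrow> 'a"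
  assumes "finite {x. x < t \<and> f x \<noteq> x}" "\<forall>y\<le>t. w y = y" "\<forall>x\<in>{t<..<b}. w (f x) = x"
  shows "finite {x. x < b \<and> (w \<circ> f) x \<noteq> x}"
proof -
  have "{x. x < b \<and> (w \<circ> f) x \<noteq> x} \<subseteq> insert t {x. x < t \<and> f x \<noteq> x}"
  proof clarify
    fix x assume "x < b" "(w \<circ> f) x \<noteq> x" "x \<noteq> t"
    then show "x < t \<and> f x \<noteq> x"
      using assms(2,3) by (cases "x < t") (auto simp: not_less)
  qed
  then show ?thesis
    using assms(1) finite_subset by blast
qed

lemma reduced_below_comp:
  assumes red: "reduced_below t f B"
    and b: "t < b" "b \<le> 1" "{t<..<b} \<inter> B = {}"
    and img: "f ` {t<..<b} = {p<..<q}"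
    and w: "w \<in> IETh_carrier" "\<forall>y\<le>t. w y = y" "\<forall>x\<in>{t<..<b}. w (f x) = x"
      "isom_on w t p" "isom_on w q 1"
  shows "reduced_below b (w \<circ> f) (B - {b})"
proof -
  have f: "f \<in> IETh_carrier" "finite {x. x < t \<and> f x \<noteq> x}" "finite B" "B \<subseteq> {t<..<1}"
    "isom_on_gaps f t B" "0 \<le> t"
    using red unfolding reduced_below_def by auto
  have "finite {x. x < b \<and> (w \<circ> f) x \<noteq> x}"
    using finite_moved_below_comp[OF f(2) w(2,3)] .
  moreover have "B - {b} \<subseteq> {b<..<1}"
    using f(4) b(3) by (force simp: not_less)
  moreover have "isom_on_gaps (w \<circ> f) b (B - {b})"
    unfolding isom_on_gaps_def
  proof (intro allI impI)
    fix u v :: real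
    assume uv: "b \<le> u" "u < v" "v \<le> 1" "{u<..<v} \<inter> (B - {b}) = {}"
    then have "{u<..<v} \<inter> B = {}" by auto
    then have f_isom: "isom_on f u v"
      using f(5) uv b(1) unfolding isom_on_gaps_def by auto
    have "t \<le> u" using uv(1) b(1) by simp
    have "{u<..<v} \<inter> {t<..<b} = {}" using uv(1) by auto
    then have "f ` {u<..<v} \<inter> {p<..<q} = {}"
      using IETh_carrier_bij[OF f(1)] unfolding img(1)[symmetric]
      by (metis bij_is_inj image_Int image_empty)
    moreover have "p < q"
    proof -
      have "{p<..<q} \<noteq> {}" using b(1) unfolding img(1)[symmetric] by simp
      then show ?thesis by simp
    qed
    ultimately show "isom_on (w \<circ> f) u v"
      using isom_on_comp_outside[OF f_isom uv(2)] reduced_below_image_subset[OF red \<open>t \<le> u\<close> uv(3) f_isom]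
        w(4,5) by blast
  qed
  ultimately show ?thesis
    unfolding reduced_below_def using IETh_carrier_comp w(1) f b by auto
qed

lemma reduced_below_step:
  assumes red: "reduced_below t f B" and "t < 1"
  defines "b \<equiv> Min (insert 1 B)"
  obtains g where "reduced_below b g (B - {b})"
    "close_to_flip_product g \<Longrightarrow> close_to_flip_product f"
proof -
  have B: "finite B" "B \<subseteq> {t<..<1}" and "0 \<le> t" and gaps: "isom_on_gaps f t B"
    using red unfolding reduced_below_def by auto
  have b: "t < b" "b \<le> 1" "{t<..<b} \<inter> B = {}"
    using B \<open>t < 1\<close> unfolding b_def by (auto simp: subset_iff Min_gr_iff)
  then have "isom_on f t b"
    using gaps unfolding isom_on_gaps_def by simp
  then obtain p where img: "f ` {t<..<b} = {p<..<p + (b - t)}"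
    using isom_on_image by blast
  define q where "q = p + (b - t)"
  have "{p<..<q} \<subseteq> {t..1}"
    using reduced_below_image_subset[OF red order.refl b(2) \<open>isom_on f t b\<close>] img unfolding q_def by simp
  then have pq: "0 \<le> t" "t \<le> p" "p \<le> q" "q \<le> 1"
    using b(1) \<open>0 \<le> t\<close> unfolding q_def by (auto simp: greaterThanLessThan_subseteq_atLeastAtMost_iff)
  have "isom_on (rotation t p q \<circ> f) t b"
    using isom_on_comp[OF \<open>isom_on f t b\<close> rotation_isom_on_right[OF pq(2,3)]] img
    unfolding q_def by simp
  moreover have "(rotation t p q \<circ> f) ` {t<..<b} = {t<..<b}"
    using img rotation_image_right[OF pq(2,3)] unfolding q_def image_comp[symmetric] by simp
  \<comment> \<open>\<open>s = t\<close> means that no orientation flip is needed, since \<open>flip t t = id\<close>\<close>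
  ultimately obtain s where s: "s \<in> {t, b}" "\<forall>x\<in>{t<..<b}. flip t s (rotation t p q (f x)) = x"
    using isom_on_self_cases[of "rotation t p q \<circ> f" t b] b(1) flip_self by fastforce
  have "s \<in> {t, t + (q - p)}" using s(1) unfolding q_def by simp
  note w = flip_comp_rotation[OF pq this]
  have "reduced_below b ((flip t s \<circ> rotation t p q) \<circ> f) (B - {b})"
    using reduced_below_comp[OF red b img[folded q_def] w(1,2) _ w(3,4)] s(2) by simp
  moreover have "close_to_flip_product ((flip t s \<circ> rotation t p q) \<circ> f) \<Longrightarrow> close_to_flip_product f"
    using w(5) by blast
  ultimately show thesis using that by blast
qed

lemma reduced_below_one_close_to_flip_product:
  assumes "reduced_below 1 f B"
  shows "close_to_flip_product f"
proof -
  have "f permutes IX" "finite {x. x < 1 \<and> f x \<noteq> x}"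
    using assms unfolding reduced_below_def IETh_carrier_iff by auto
  moreover have "{x. f x \<noteq> foldr (\<circ>) [] id x} \<subseteq> {x. x < 1 \<and> f x \<noteq> x}"
    using permutes_not_in[OF \<open>f permutes IX\<close>] unfolding IX_def by (force simp: not_less)
  ultimately show ?thesis
    unfolding close_to_flip_product_def by (metis empty_subsetI finite_subset list.set(1))
qed

lemma reduced_below_close_to_flip_product:
  assumes "reduced_below t f B"
  shows "close_to_flip_product f"
proof -
  have "finite B" using assms unfolding reduced_below_def by simp
  then show ?thesis
    using assms
  proof (induction B arbitrary: t f rule: finite_psubset_induct)
    case (psubset B)
    show ?case
    proof (cases "t < 1")
      case False
      then have "t = 1" using psubset.prems unfolding reduced_below_def by simp
      then show ?thesis using psubset.prems reduced_below_one_close_to_flip_product by blast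
    next
      case True
      define b where "b = Min (insert 1 B)"
      obtain g where g: "reduced_below b g (B - {b})"
        and reduces: "close_to_flip_product g \<Longrightarrow> close_to_flip_product f"
        using reduced_below_step[OF psubset.prems True] unfolding b_def by blast
      show ?thesis
      proof (cases "b \<in> B")
        case True
        then have "B - {b} \<subset> B" by blast
        then show ?thesis using psubset.IH g reduces by blast
      next
        case False
        then have "b = 1"
          using Min_in[of "insert 1 B"] psubset.hyps unfolding b_def by auto
        then show ?thesis using g reduces reduced_below_one_close_to_flip_product by blast
      qed
    qed
  qed
qed

lemma IETh_carrier_close_to_flip_product:
  assumes "f \<in> IETh_carrier"
  shows "close_to_flip_product f"
proof -
  obtain B where f: "f permutes IX" "finite B" "isom_on_gaps f 0 B"
    using assms unfolding IETh_carrier_iff by blast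
  have "isom_on_gaps f 0 (B \<inter> {0<..<1})"
    using f(3) unfolding isom_on_gaps_def by (auto simp: disjoint_iff)
  moreover have "finite {x. x < 0 \<and> f x \<noteq> x}"
  proof -
    have "{x. x < 0 \<and> f x \<noteq> x} = {}"
      using permutes_not_in[OF f(1)] unfolding IX_def by auto
    then show ?thesis by (metis finite.emptyI)
  qed
  ultimately have "reduced_below 0 f (B \<inter> {0<..<1})"
    using assms f(2) unfolding reduced_below_def by auto
  then show ?thesis
    using reduced_below_close_to_flip_product by blast
qed

section \<open>The group and its quotient by finitely supported permutations\<close>

lemma support_comp_inv:
  assumes "bij g"
  shows "{y. h (inv_into UNIV g y) \<noteq> y} = g ` {x. h x \<noteq> g x}"
proof
  show "{y. h (inv_into UNIV g y) \<noteq> y} \<subseteq> g ` {x. h x \<noteq> g x}"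
  proof
    fix y assume "y \<in> {y. h (inv_into UNIV g y) \<noteq> y}"
    moreover have "g (inv_into UNIV g y) = y"
      using assms by (simp add: bij_is_surj surj_f_inv_f)
    ultimately show "y \<in> g ` {x. h x \<noteq> g x}"
      by (metis (mono_tags, lifting) image_eqI mem_Collect_eq)
  qed
  show "g ` {x. h x \<noteq> g x} \<subseteq> {y. h (inv_into UNIV g y) \<noteq> y}"
    using assms by (auto simp: bij_is_inj)
qed

lemma IETh_carrier_finite_modification:
  assumes "g \<in> IETh_carrier" "h permutes IX" "finite {x. h x \<noteq> g x}"
  shows "h \<in> IETh_carrier"
proof -
  obtain B where "finite B" "isom_on_gaps g 0 B"
    using assms(1) unfolding IETh_carrier_iff by blast
  then have "isom_on_gaps h 0 (B \<union> {x. h x \<noteq> g x})"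
    unfolding isom_on_gaps_def by (auto intro: isom_on_cong)
  then show ?thesis
    using assms(2,3) \<open>finite B\<close> unfolding IETh_carrier_iff by blast
qed

lemma flip_product_in_IETh_carrier: "set ps \<subseteq> flips \<Longrightarrow> foldr (\<circ>) ps id \<in> IETh_carrier"
  by (induction ps) (use flips_subset_IETh_carrier in \<open>auto intro: IETh_carrier_comp id_in_IETh_carrier\<close>)

lemma flip_product_inv_in_IETh_carrier:
  "set ps \<subseteq> flips \<Longrightarrow> inv_into UNIV (foldr (\<circ>) ps id) \<in> IETh_carrier"
proof (induction ps)
  case Nil
  then show ?case using id_in_IETh_carrier by (simp add: id_def)
next
  case (Cons \<phi> ps)
  then have \<phi>: "\<phi> \<in> IETh_carrier" "\<phi> \<circ> \<phi> = id"
    using flips_subset_IETh_carrier unfolding flips_def by (auto simp: fun_eq_iff)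
  have "bij \<phi>" "bij (foldr (\<circ>) ps id)"
    using \<phi>(1) flip_product_in_IETh_carrier Cons.prems IETh_carrier_bij by auto
  then have "inv_into UNIV (foldr (\<circ>) (\<phi> # ps) id) = inv_into UNIV (foldr (\<circ>) ps id) \<circ> \<phi>"
    using inv_unique_comp[OF \<phi>(2) \<phi>(2)] by (simp add: o_inv_distrib)
  moreover have "inv_into UNIV (foldr (\<circ>) ps id) \<in> IETh_carrier"
    using Cons.IH Cons.prems by (simp only: set_simps insert_subset)
  ultimately show ?case
    using IETh_carrier_comp \<phi>(1) by metis
qed

lemma inv_in_IETh_carrier:
  assumes "f \<in> IETh_carrier"
  shows "inv_into UNIV f \<in> IETh_carrier"
proof -
  obtain ps where ps: "set ps \<subseteq> flips" "finite {x. f x \<noteq> foldr (\<circ>) ps id x}"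
    using IETh_carrier_close_to_flip_product[OF assms] unfolding close_to_flip_product_def by blast
  define P where "P = foldr (\<circ>) ps id"
  have f: "f permutes IX" using assms unfolding IETh_carrier_iff by blast
  have "bij P" using flip_product_in_IETh_carrier[OF ps(1)] IETh_carrier_bij unfolding P_def by blast
  have "{y. inv_into UNIV f y \<noteq> inv_into UNIV P y} \<subseteq> {y. P (inv_into UNIV f y) \<noteq> y}"
    using \<open>bij P\<close> by (auto simp: bij_inv_eq_iff)
  also have "\<dots> = f ` {x. P x \<noteq> f x}"
    by (rule support_comp_inv[OF permutes_bij[OF f]])
  finally have sub: "{y. inv_into UNIV f y \<noteq> inv_into UNIV P y} \<subseteq> f ` {x. P x \<noteq> f x}" .
  have "{x. P x \<noteq> f x} = {x. f x \<noteq> foldr (\<circ>) ps id x}"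
    unfolding P_def by auto
  then have "finite (f ` {x. P x \<noteq> f x})"
    using ps(2) by simp
  then have "finite {y. inv_into UNIV f y \<noteq> inv_into UNIV P y}"
    using sub by (rule finite_subset[rotated])
  then show ?thesis
    unfolding P_def
    by (rule IETh_carrier_finite_modification[OF flip_product_inv_in_IETh_carrier[OF ps(1)] permutes_inv[OF f]])
qed

lemma IETh_group: "group IETh"
proof (rule groupI)
  fix f assume "f \<in> carrier IETh"
  then have "f \<in> IETh_carrier" unfolding IETh_def by simp
  then show "\<exists>g\<in>carrier IETh. g \<otimes>\<^bsub>IETh\<^esub> f = \<one>\<^bsub>IETh\<^esub>"
    using inv_in_IETh_carrier inv_o_cancel[OF bij_is_inj[OF IETh_carrier_bij]]
    unfolding IETh_def by auto
qed (auto simp: IETh_def id_in_IETh_carrier IETh_carrier_comp comp_assoc)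

lemma IETh_inv: "f \<in> IETh_carrier \<Longrightarrow> inv\<^bsub>IETh\<^esub> f = inv_into UNIV f"
  by (rule group.inv_equality[OF IETh_group])
    (simp_all add: IETh_def inv_in_IETh_carrier inv_o_cancel bij_is_inj IETh_carrier_bij)

lemma Sfin_inv: "f \<in> Sfin \<Longrightarrow> inv_into UNIV f \<in> Sfin"
proof -
  assume "f \<in> Sfin"
  then have f: "f \<in> IETh_carrier" "finite {x. f x \<noteq> x}" unfolding Sfin_def by auto
  have "{y. inv_into UNIV f y \<noteq> y} = f ` {x. x \<noteq> f x}"
    using support_comp_inv[OF IETh_carrier_bij[OF f(1)], of id] by simp
  then show ?thesis
    unfolding Sfin_def using f by (auto simp: inv_in_IETh_carrier eq_commute)
qed

lemma Sfin_comp: "f \<in> Sfin \<Longrightarrow> g \<in> Sfin \<Longrightarrow> f \<circ> g \<in> Sfin"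
proof -
  assume "f \<in> Sfin" "g \<in> Sfin"
  moreover have "{x. f (g x) \<noteq> x} \<subseteq> {x. g x \<noteq> x} \<union> {x. f x \<noteq> x}" by auto
  ultimately show ?thesis
    unfolding Sfin_def by (auto intro: IETh_carrier_comp finite_subset)
qed

lemma Sfin_conj:
  assumes f: "f \<in> IETh_carrier" and h: "h \<in> Sfin"
  shows "f \<circ> h \<circ> inv_into UNIV f \<in> Sfin"
proof -
  have "{x. f (h x) \<noteq> f x} = {x. h x \<noteq> x}"
    using IETh_carrier_bij[OF f] by (auto simp: bij_is_inj inj_eq)
  then have "{y. f (h (inv_into UNIV f y)) \<noteq> y} = f ` {x. h x \<noteq> x}"
    using support_comp_inv[OF IETh_carrier_bij[OF f], of "f \<circ> h"] by simp
  moreover have "f \<circ> h \<circ> inv_into UNIV f \<in> IETh_carrier"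
    using f h IETh_carrier_comp inv_in_IETh_carrier unfolding Sfin_def by blast
  ultimately show ?thesis
    using h unfolding Sfin_def by simp
qed

lemma Sfin_normal: "Sfin \<lhd> IETh"
proof -
  interpret group IETh by (rule IETh_group)
  have "subgroup Sfin IETh"
  proof (rule subgroupI)
    show "Sfin \<subseteq> carrier IETh" "Sfin \<noteq> {}"
      using id_in_IETh_carrier unfolding Sfin_def IETh_def by auto
  next
    fix f assume "f \<in> Sfin"
    then show "inv\<^bsub>IETh\<^esub> f \<in> Sfin"
      using Sfin_inv IETh_inv unfolding Sfin_def by auto
  next
    fix f g assume "f \<in> Sfin" "g \<in> Sfin"
    then show "f \<otimes>\<^bsub>IETh\<^esub> g \<in> Sfin"
      using Sfin_comp unfolding IETh_def by simp
  qed
  moreover have "f \<otimes>\<^bsub>IETh\<^esub> h \<otimes>\<^bsub>IETh\<^esub> inv\<^bsub>IETh\<^esub> f \<in> Sfin"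
    if "f \<in> carrier IETh" "h \<in> Sfin" for f h
  proof -
    have "f \<in> IETh_carrier" using that(1) unfolding IETh_def by simp
    then show ?thesis
      unfolding IETh_inv[OF \<open>f \<in> IETh_carrier\<close>] using Sfin_conj that(2) by (simp add: IETh_def)
  qed
  ultimately show ?thesis
    unfolding normal_inv_iff by blast
qed

lemma flip_product_in_generate:
  "set ps \<subseteq> flips \<Longrightarrow> foldr (\<circ>) ps id \<in> generate IETh flips"
proof (induction ps)
  case Nil
  then show ?case using generate.one[of IETh flips] by (simp add: IETh_def id_def)
next
  case (Cons \<phi> ps)
  have "\<phi> \<in> generate IETh flips"
    using Cons.prems by (intro generate.incl) simp
  moreover have "foldr (\<circ>) ps id \<in> generate IETh flips"
    using Cons.IH Cons.prems by (simp only: set_simps insert_subset)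
  ultimately have "\<phi> \<otimes>\<^bsub>IETh\<^esub> foldr (\<circ>) ps id \<in> generate IETh flips"
    by (rule generate.eng)
  moreover have "foldr (\<circ>) (\<phi> # ps) id = \<phi> \<otimes>\<^bsub>IETh\<^esub> foldr (\<circ>) ps id"
    by (simp add: IETh_def)
  ultimately show ?case by (simp only:)
qed

lemma Sfin_rcos_eq_if_finite_diff:
  assumes "f \<in> IETh_carrier" "g \<in> IETh_carrier" "finite {x. f x \<noteq> g x}"
  shows "Sfin #>\<^bsub>IETh\<^esub> f = Sfin #>\<^bsub>IETh\<^esub> g"
proof -
  interpret N: normal Sfin IETh by (rule Sfin_normal)
  define s where "s = f \<circ> inv_into UNIV g"
  have "bij g" using assms(2) by (rule IETh_carrier_bij)
  then have "{y. s y \<noteq> y} = g ` {x. f x \<noteq> g x}"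
    unfolding s_def using support_comp_inv[of g f] by simp
  moreover have "s \<in> IETh_carrier"
    unfolding s_def using assms(1,2) by (intro IETh_carrier_comp inv_in_IETh_carrier)
  ultimately have "s \<in> Sfin"
    unfolding Sfin_def using assms(3) by simp
  moreover have "f = s \<circ> g"
    unfolding s_def using \<open>bij g\<close> by (simp add: comp_assoc bij_is_inj)
  ultimately have "f \<in> Sfin #>\<^bsub>IETh\<^esub> g"
    unfolding r_coset_def IETh_def by auto
  then have "Sfin #>\<^bsub>IETh\<^esub> g = Sfin #>\<^bsub>IETh\<^esub> f"
    using assms(2) N.subgroup_axioms by (intro N.repr_independence) (simp_all add: IETh_def)
  then show ?thesis by simp
qed

lemma rcos_in_image_generate_flips:
  assumes "f \<in> IETh_carrier"
  shows "Sfin #>\<^bsub>IETh\<^esub> f \<in> (\<lambda>g. Sfin #>\<^bsub>IETh\<^esub> g) ` generate IETh flips"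
proof -
  obtain ps where ps: "set ps \<subseteq> flips" "finite {x. f x \<noteq> foldr (\<circ>) ps id x}"
    using IETh_carrier_close_to_flip_product[OF assms] unfolding close_to_flip_product_def by blast
  then have "Sfin #>\<^bsub>IETh\<^esub> f = Sfin #>\<^bsub>IETh\<^esub> foldr (\<circ>) ps id"
    using Sfin_rcos_eq_if_finite_diff[OF assms flip_product_in_IETh_carrier] by blast
  then show ?thesis
    using flip_product_in_generate[OF ps(1)] by blast
qed

theorem lemma4p8:
  shows "generate IET ((\<lambda>f. Sfin #>\<^bsub>IETh\<^esub> f) ` flips) = carrier IET"
proof -
  interpret N: normal Sfin IETh by (rule Sfin_normal)
  interpret \<pi>: group_hom IETh IET "\<lambda>f. Sfin #>\<^bsub>IETh\<^esub> f"
    unfolding IET_def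
    by (intro group_hom.intro group_hom_axioms.intro IETh_group N.factorgroup_is_group N.r_coset_hom_Mod)
  have flips: "flips \<subseteq> carrier IETh"
    using flips_subset_IETh_carrier unfolding IETh_def by simp
  have "carrier IET = (\<lambda>f. Sfin #>\<^bsub>IETh\<^esub> f) ` generate IETh flips"
  proof
    show "carrier IET \<subseteq> (\<lambda>f. Sfin #>\<^bsub>IETh\<^esub> f) ` generate IETh flips"
      unfolding IET_def FactGroup_def RCOSETS_def
      using rcos_in_image_generate_flips by (auto simp: IETh_def)
    show "(\<lambda>f. Sfin #>\<^bsub>IETh\<^esub> f) ` generate IETh flips \<subseteq> carrier IET"
      by (intro image_subsetI \<pi>.hom_closed group.generate_in_carrier[OF IETh_group flips])
  qed
  then show ?thesis
    using \<pi>.generate_img[OF flips] by simp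
qed

end
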